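(* Let $N\ge 2$, $p>1$, $0<r_0<R_0\le\infty$, $\Omega=B]r_0,R_0[$, and $V\in C(\Omega)$. Let $u$ be a positive radial strictly monotone $C^2$-subsolution and $v$ a positive radial strictly monotone $C^2$-supersolution of $-\Delta_p w-V|w|^{p-2}w=0$ in $\Omega$, and assume that either $u$ is a strict subsolution or $v$ is a strict supersolution. If $(u/v)'(\rho)=0$ for some $\rho\in\,]r_0,R_0[$, then $(u/v)''(\rho)>0$. In particular, $u/v$ cannot have a local maximum in $B]r_0,R_0[$.
   Context: $\Delta_p w=\nabla\cdot(|\nabla w|^{p-2}\nabla w)$. $B]r_0,R_0[=\{x\in\mathbb{R}^N: r_0<|x|<R_0\}$, $B[r_0,R_0[=\{x: r_0\le|x|<R_0\}$. A $C^2$-subsolution (resp. supersolution) in $\Omega$ is $w\in C^2(B[r_0,R_0[)$ with $-\Delta_p w-V|w|^{p-2}w\le 0$ (resp. $\ge0$) pointwise in $\Omega$; strict means $<0$ (resp. $>0$) at every point of $\Omega$. Radial functions $w(x)=\phi(|x|)$ are identified with $\phi$ and derivatives $'$ are with respect to $r=|x|$; strictly monotone means $w'(r)>0$ for all $r\in[r_0,R_0[$ or $w'(r)<0$ for all $r\in[r_0,R_0[$. *)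

theory Defs
  imports "HOL-Analysis.Analysis"
begin

definition partial :: "'n \<Rightarrow> (real^'n \<Rightarrow> real) \<Rightarrow> real^'n \<Rightarrow> real" where
  "partial i w x = deriv (\<lambda>t. w (x + t *\<^sub>R axis i 1)) 0"

definition grad :: "(real^'n \<Rightarrow> real) \<Rightarrow> real^'n \<Rightarrow> real^'n" where
  "grad w x = (\<chi> i. partial i w x)"

definition divergence :: "(real^'n \<Rightarrow> real^'n) \<Rightarrow> real^'n \<Rightarrow> real" where
  "divergence F x = (\<Sum>i\<in>UNIV. partial i (\<lambda>y. F y $ i) x)"

definition p_laplacian :: "real \<Rightarrow> (real^'n \<Rightarrow> real) \<Rightarrow> real^'n \<Rightarrow> real" where
  "p_laplacian p w x = divergence (\<lambda>y. (norm (grad w y)) powr (p - 2) *\<^sub>R grad w y) x"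

definition rad_co :: "real \<Rightarrow> ereal \<Rightarrow> real set" where
  "rad_co r0 R0 = {r. r0 \<le> r \<and> ereal r < R0}"

definition rad_oo :: "real \<Rightarrow> ereal \<Rightarrow> real set" where
  "rad_oo r0 R0 = {r. r0 < r \<and> ereal r < R0}"

definition annulus :: "real \<Rightarrow> ereal \<Rightarrow> (real^'n) set" where
  "annulus r0 R0 = {x. r0 < norm x \<and> ereal (norm x) < R0}"

definition C2_radial :: "real set \<Rightarrow> (real \<Rightarrow> real) \<Rightarrow> (real \<Rightarrow> real) \<Rightarrow> (real \<Rightarrow> real) \<Rightarrow> bool" where
  "C2_radial S phi phi1 phi2 \<longleftrightarrow>
     (\<forall>r\<in>S. (phi has_real_derivative phi1 r) (at r within S)
           \<and> (phi1 has_real_derivative phi2 r) (at r within S))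
     \<and> continuous_on S phi2"

definition strictly_monotone_radial :: "real set \<Rightarrow> (real \<Rightarrow> real) \<Rightarrow> bool" where
  "strictly_monotone_radial S phi1 \<longleftrightarrow> (\<forall>r\<in>S. phi1 r > 0) \<or> (\<forall>r\<in>S. phi1 r < 0)"

definition op_pV :: "real \<Rightarrow> (real^'n \<Rightarrow> real) \<Rightarrow> (real^'n \<Rightarrow> real) \<Rightarrow> real^'n \<Rightarrow> real" where
  "op_pV p V w x = - p_laplacian p w x - V x * (\<bar>w x\<bar> powr (p - 2) * w x)"

definition subsolution :: "real \<Rightarrow> (real^'n \<Rightarrow> real) \<Rightarrow> (real^'n) set \<Rightarrow> (real^'n \<Rightarrow> real) \<Rightarrow> bool" where
  "subsolution p V \<Omega> w \<longleftrightarrow> (\<forall>x\<in>\<Omega>. op_pV p V w x \<le> 0)"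
definition supersolution :: "real \<Rightarrow> (real^'n \<Rightarrow> real) \<Rightarrow> (real^'n) set \<Rightarrow> (real^'n \<Rightarrow> real) \<Rightarrow> bool" where
  "supersolution p V \<Omega> w \<longleftrightarrow> (\<forall>x\<in>\<Omega>. op_pV p V w x \<ge> 0)"
definition strict_subsolution :: "real \<Rightarrow> (real^'n \<Rightarrow> real) \<Rightarrow> (real^'n) set \<Rightarrow> (real^'n \<Rightarrow> real) \<Rightarrow> bool" where
  "strict_subsolution p V \<Omega> w \<longleftrightarrow> (\<forall>x\<in>\<Omega>. op_pV p V w x < 0)"
definition strict_supersolution :: "real \<Rightarrow> (real^'n \<Rightarrow> real) \<Rightarrow> (real^'n) set \<Rightarrow> (real^'n \<Rightarrow> real) \<Rightarrow> bool" where
  "strict_supersolution p V \<Omega> w \<longleftrightarrow> (\<forall>x\<in>\<Omega>. op_pV p V w x > 0)"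

end

theory Submission
  imports Defs
begin

text \<open>At a critical point \<open>\<rho>\<close> of \<open>u/v\<close> the logarithmic derivatives agree,
  \<open>u'/u = v'/v = a\<close>, and \<open>a \<noteq> 0\<close> by strict monotonicity. For a positive radial profile
  \<open>\<phi>\<close> with \<open>\<phi>' = a \<phi>\<close> at \<open>\<rho>\<close>, the radial form of the \<open>p\<close>-Laplacian gives
  \<open>-\<Delta>\<^sub>p \<phi> - V \<phi>\<^sup>p\<^sup>-\<^sup>1 = -\<phi>\<^sup>p\<^sup>-\<^sup>1 ((p-1)|a|\<^sup>p\<^sup>-\<^sup>2 \<phi>''/\<phi> + (N-1)/\<rho> |a|\<^sup>p\<^sup>-\<^sup>2 a + V)\<close>,
  in which only the term \<open>\<phi>''/\<phi>\<close> depends on \<open>\<phi>\<close>. Comparing the signs for the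
  subsolution \<open>u\<close> and the supersolution \<open>v\<close>, one of them strict, yields \<open>u''/u > v''/v\<close>,
  which is \<open>(u/v)''(\<rho>) > 0\<close>.\<close>

lemma has_real_derivative_abs_powr_mult:
  fixes f :: "real \<Rightarrow> real"
  assumes f: "(f has_real_derivative f') (at r)" and nz: "f r \<noteq> 0"
  shows "((\<lambda>s. \<bar>f s\<bar> powr q * f s) has_real_derivative (q + 1) * \<bar>f r\<bar> powr q * f') (at r)"
proof -
  have abs_deriv: "((\<lambda>s. \<bar>f s\<bar>) has_real_derivative sgn (f r) * f') (at r)"
  proof -
    have "norm = (abs :: real \<Rightarrow> real)" by (rule ext) simp
    then have "(abs has_real_derivative sgn (f r)) (at (f r))"
      using has_derivative_norm[OF nz] by (simp add: has_field_derivative_def mult_commute_abs)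
    from DERIV_chain2[OF this f] show ?thesis .
  qed
  have "((\<lambda>s. \<bar>f s\<bar> powr q * f s) has_real_derivative
          q * \<bar>f r\<bar> powr (q - 1) * (sgn (f r) * f') * f r + f' * \<bar>f r\<bar> powr q) (at r)"
    using DERIV_mult[OF DERIV_fun_powr[OF abs_deriv, of q] f] nz by simp
  moreover have "\<bar>f r\<bar> powr (q - 1) * (sgn (f r) * f r) = \<bar>f r\<bar> powr q"
    using nz by (simp add: powr_diff sgn_if)
  ultimately show ?thesis
    by (simp add: algebra_simps)
qed

lemma has_real_derivative_radial_along_axis:
  fixes x :: "real^'n" and \<psi> :: "real \<Rightarrow> real"
  assumes "x \<noteq> 0" and "(\<psi> has_real_derivative d) (at (norm x))"
  shows "((\<lambda>t. \<psi> (norm (x + t *\<^sub>R axis i 1))) has_real_derivative d * (x $ i / norm x)) (at 0)"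
proof -
  have line: "((\<lambda>t. x + t *\<^sub>R axis i (1::real)) has_derivative (\<lambda>h. h *\<^sub>R axis i 1)) (at 0)"
    by (auto intro!: derivative_eq_intros)
  have "(norm has_derivative (\<lambda>h. h \<bullet> sgn x)) (at (x + 0 *\<^sub>R axis i 1))"
    using has_derivative_norm[OF assms(1)] by simp
  from has_derivative_compose[OF line this]
  have "((\<lambda>t. norm (x + t *\<^sub>R axis i 1)) has_derivative (\<lambda>h. (h *\<^sub>R axis i 1) \<bullet> sgn x)) (at 0)"
    by (simp add: o_def)
  then have "((\<lambda>t. norm (x + t *\<^sub>R axis i 1)) has_real_derivative x $ i / norm x) (at 0)"
    unfolding has_field_derivative_def
    by (rule has_derivative_eq_rhs) (auto simp: inner_axis' sgn_div_norm field_simps)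
  from DERIV_chain2[OF _ this] assms(2) show ?thesis
    by (simp add: mult.commute)
qed

lemma grad_radial:
  fixes x :: "real^'n"
  assumes "x \<noteq> 0" and "(\<phi> has_real_derivative d) (at (norm x))"
  shows "grad (\<lambda>x. \<phi> (norm x)) x = (d / norm x) *\<^sub>R x"
  using DERIV_imp_deriv[OF has_real_derivative_radial_along_axis[OF assms]]
  by (simp add: grad_def partial_def vec_eq_iff)

lemma p_laplacian_radial:
  fixes x :: "real^'n" and \<phi> \<phi>1 \<phi>2 :: "real \<Rightarrow> real"
  assumes S: "open S" "S \<subseteq> {0<..}"
    and d1: "\<And>r. r \<in> S \<Longrightarrow> (\<phi> has_real_derivative \<phi>1 r) (at r)"
    and d2: "\<And>r. r \<in> S \<Longrightarrow> (\<phi>1 has_real_derivative \<phi>2 r) (at r)"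
    and x: "norm x \<in> S" and nz: "\<phi>1 (norm x) \<noteq> 0"
  shows "p_laplacian p (\<lambda>x. \<phi> (norm x)) x =
           (p - 1) * \<bar>\<phi>1 (norm x)\<bar> powr (p - 2) * \<phi>2 (norm x)
         + (real CARD('n) - 1) / norm x * \<bar>\<phi>1 (norm x)\<bar> powr (p - 2) * \<phi>1 (norm x)"
proof -
  define f where "f = (\<lambda>x::real^'n. \<phi> (norm x))"
  define g where "g s = \<bar>\<phi>1 s\<bar> powr (p - 2) * \<phi>1 s / s" for s
  define g' where "g' s = (p - 1) * \<bar>\<phi>1 s\<bar> powr (p - 2) * \<phi>2 s / s - g s / s" for s
  have ne0: "y \<noteq> 0" if "norm y \<in> S" for y :: "real^'n"
    using that S(2) by auto
  have flux: "(norm (grad f y) powr (p - 2) *\<^sub>R grad f y) $ i = g (norm y) * y $ i"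
    if "norm y \<in> S" for y i
    using grad_radial[OF ne0[OF that] d1[OF that]] ne0[OF that]
    by (simp add: f_def g_def)
  have "(g has_real_derivative
          ((p - 2 + 1) * \<bar>\<phi>1 (norm x)\<bar> powr (p - 2) * \<phi>2 (norm x) * norm x
            - \<bar>\<phi>1 (norm x)\<bar> powr (p - 2) * \<phi>1 (norm x) * 1) / (norm x * norm x)) (at (norm x))"
    unfolding g_def
    by (rule DERIV_divide[OF has_real_derivative_abs_powr_mult[OF d2[OF x] nz] DERIV_ident])
      (use ne0[OF x] in simp)
  then have gder: "(g has_real_derivative g' (norm x)) (at (norm x))"
    using ne0[OF x] by (simp add: g_def g'_def diff_divide_distrib)
  have partial_flux: "partial i (\<lambda>y. (norm (grad f y) powr (p - 2) *\<^sub>R grad f y) $ i) x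
                        = g' (norm x) * (x $ i / norm x) * x $ i + g (norm x)" for i
  proof -
    let ?T = "(\<lambda>t. x + t *\<^sub>R axis i 1) -` norm -` S"
    have T: "open ?T" "0 \<in> ?T"
      using S(1) x by (auto intro!: open_vimage continuous_intros)
    have D: "((\<lambda>t. g (norm (x + t *\<^sub>R axis i 1)) * (x $ i + t)) has_real_derivative
               g' (norm x) * (x $ i / norm x) * x $ i + g (norm x)) (at 0)"
      using DERIV_mult[OF has_real_derivative_radial_along_axis[OF ne0[OF x] gder]
                         DERIV_add[OF DERIV_const DERIV_ident]]
      by simp
    have eq: "g (norm (x + t *\<^sub>R axis i 1)) * (x $ i + t)
                    = (norm (grad f (x + t *\<^sub>R axis i 1)) powr (p - 2) *\<^sub>R grad f (x + t *\<^sub>R axis i 1)) $ i"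
      if "t \<in> ?T" for t
      using flux[of "x + t *\<^sub>R axis i 1" i] that by (simp add: axis_def)
    show ?thesis
      unfolding partial_def
      using has_field_derivative_transform_within_open[OF D T eq] by (rule DERIV_imp_deriv)
  qed
  have sq: "(\<Sum>i\<in>UNIV. x $ i * x $ i) = norm x ^ 2"
    by (simp add: power2_norm_eq_inner inner_vec_def)
  have "p_laplacian p f x = (\<Sum>i\<in>UNIV. g' (norm x) / norm x * (x $ i * x $ i) + g (norm x))"
    unfolding p_laplacian_def divergence_def partial_flux by (simp add: field_simps)
  also have "\<dots> = g' (norm x) / norm x * norm x ^ 2 + real CARD('n) * g (norm x)"
    unfolding sum.distrib sum_distrib_left[symmetric] sq by simp
  also have "\<dots> = norm x * g' (norm x) + real CARD('n) * g (norm x)"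
    by (simp add: power2_eq_square)
  also have "\<dots> = (p - 1) * \<bar>\<phi>1 (norm x)\<bar> powr (p - 2) * \<phi>2 (norm x)
         + (real CARD('n) - 1) / norm x * \<bar>\<phi>1 (norm x)\<bar> powr (p - 2) * \<phi>1 (norm x)"
    using ne0[OF x] by (simp add: g_def g'_def field_simps)
  finally show ?thesis
    unfolding f_def .
qed

lemma op_pV_radial_log_derivative:
  fixes x :: "real^'n" and \<phi> \<phi>1 \<phi>2 :: "real \<Rightarrow> real"
  assumes S: "open S" "S \<subseteq> {0<..}"
    and d1: "\<And>r. r \<in> S \<Longrightarrow> (\<phi> has_real_derivative \<phi>1 r) (at r)"
    and d2: "\<And>r. r \<in> S \<Longrightarrow> (\<phi>1 has_real_derivative \<phi>2 r) (at r)"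
    and x: "norm x \<in> S" and pos: "\<phi> (norm x) > 0"
    and a: "\<phi>1 (norm x) = a * \<phi> (norm x)" "a \<noteq> 0"
  shows "op_pV p V (\<lambda>x. \<phi> (norm x)) x = - (\<phi> (norm x) powr (p - 1) *
           ((p - 1) * \<bar>a\<bar> powr (p - 2) * (\<phi>2 (norm x) / \<phi> (norm x))
            + (real CARD('n) - 1) / norm x * \<bar>a\<bar> powr (p - 2) * a + V x))"
proof -
  let ?r = "norm x"
  have nz: "\<phi>1 ?r \<noteq> 0"
    using a pos by simp
  have plap: "p_laplacian p (\<lambda>x. \<phi> (norm x)) x =
      (p - 1) * \<bar>\<phi>1 ?r\<bar> powr (p - 2) * \<phi>2 ?r
      + (real CARD('n) - 1) / ?r * \<bar>\<phi>1 ?r\<bar> powr (p - 2) * \<phi>1 ?r"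
    by (rule p_laplacian_radial[OF S d1 d2 x nz])
  have abs_pow: "\<bar>\<phi>1 ?r\<bar> powr (p - 2) = \<bar>a\<bar> powr (p - 2) * \<phi> ?r powr (p - 2)"
    using pos by (simp add: a abs_mult powr_mult)
  have pow: "\<phi> ?r powr (p - 2) = \<phi> ?r powr (p - 1) / \<phi> ?r"
    using pos powr_diff[of "\<phi> ?r" "p - 1" 1] by simp
  have op: "op_pV p V (\<lambda>x. \<phi> (norm x)) x =
          - ((p - 1) * \<bar>\<phi>1 ?r\<bar> powr (p - 2) * \<phi>2 ?r
             + (real CARD('n) - 1) / ?r * \<bar>\<phi>1 ?r\<bar> powr (p - 2) * \<phi>1 ?r)
          - V x * (\<phi> ?r powr (p - 2) * \<phi> ?r)"
    unfolding op_pV_def plap using pos by simp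
  have "?r \<noteq> 0"
    using S(2) x by auto
  then show ?thesis
    unfolding op abs_pow pow using pos by (simp add: a field_simps)
qed

lemma second_derivative_comparison_at_touching:
  fixes x :: "real^'n" and u u1 u2 v v1 v2 :: "real \<Rightarrow> real"
  assumes p: "p > 1" and S: "open S" "S \<subseteq> {0<..}"
    and u1: "\<And>r. r \<in> S \<Longrightarrow> (u has_real_derivative u1 r) (at r)"
    and u2: "\<And>r. r \<in> S \<Longrightarrow> (u1 has_real_derivative u2 r) (at r)"
    and v1: "\<And>r. r \<in> S \<Longrightarrow> (v has_real_derivative v1 r) (at r)"
    and v2: "\<And>r. r \<in> S \<Longrightarrow> (v1 has_real_derivative v2 r) (at r)"
    and x: "norm x \<in> S" and pos: "u (norm x) > 0" "v (norm x) > 0" and nz: "u1 (norm x) \<noteq> 0"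
    and touch: "u1 (norm x) * v (norm x) = u (norm x) * v1 (norm x)"
    and sub: "op_pV p V (\<lambda>x. u (norm x)) x \<le> 0"
    and super: "op_pV p V (\<lambda>x. v (norm x)) x \<ge> 0"
    and strict: "op_pV p V (\<lambda>x. u (norm x)) x < 0 \<or> op_pV p V (\<lambda>x. v (norm x)) x > 0"
  shows "u (norm x) * v2 (norm x) < u2 (norm x) * v (norm x)"
proof -
  let ?r = "norm x"
  define a where "a = u1 ?r / u ?r"
  define c where "c = (p - 1) * \<bar>a\<bar> powr (p - 2)"
  define b where "b = (real CARD('n) - 1) / ?r * \<bar>a\<bar> powr (p - 2) * a"
  have ua: "u1 ?r = a * u ?r" and va: "v1 ?r = a * v ?r" and "a \<noteq> 0"
    using pos nz touch by (auto simp: a_def field_simps)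
  then have c: "c > 0"
    using p by (simp add: c_def)
  have op_u: "op_pV p V (\<lambda>x. u (norm x)) x = - (u ?r powr (p - 1) * (c * (u2 ?r / u ?r) + b + V x))"
    unfolding c_def b_def by (rule op_pV_radial_log_derivative[OF S u1 u2 x pos(1) ua \<open>a \<noteq> 0\<close>])
  have op_v: "op_pV p V (\<lambda>x. v (norm x)) x = - (v ?r powr (p - 1) * (c * (v2 ?r / v ?r) + b + V x))"
    unfolding c_def b_def by (rule op_pV_radial_log_derivative[OF S v1 v2 x pos(2) va \<open>a \<noteq> 0\<close>])
  have "u ?r powr (p - 1) > 0" "v ?r powr (p - 1) > 0"
    using pos by simp_all
  then have "c * (u2 ?r / u ?r) + b + V x \<ge> 0" "c * (v2 ?r / v ?r) + b + V x \<le> 0"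
    and "c * (u2 ?r / u ?r) + b + V x > 0 \<or> c * (v2 ?r / v ?r) + b + V x < 0"
    using sub super strict unfolding op_u op_v
    by (auto simp: zero_le_mult_iff mult_le_0_iff zero_less_mult_iff mult_less_0_iff)
  then have "c * (v2 ?r / v ?r) < c * (u2 ?r / u ?r)"
    by linarith
  then have "v2 ?r / v ?r < u2 ?r / u ?r"
    using c mult_less_cancel_left_pos by blast
  then show ?thesis
    using pos by (simp add: field_simps)
qed

lemma deriv_divide_eq:
  fixes u v :: "real \<Rightarrow> real"
  assumes "(u has_real_derivative u') (at r)" "(v has_real_derivative v') (at r)" "v r \<noteq> 0"
  shows "deriv (\<lambda>r. u r / v r) r = (u' * v r - u r * v') / (v r)\<^sup>2"
  using DERIV_imp_deriv[OF DERIV_divide[OF assms]] by (simp add: power2_eq_square)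

lemma has_real_derivative_deriv_divide_at_critical:
  fixes u u1 v v1 :: "real \<Rightarrow> real"
  assumes S: "open S" "\<rho> \<in> S"
    and u1: "\<And>r. r \<in> S \<Longrightarrow> (u has_real_derivative u1 r) (at r)" and u2: "(u1 has_real_derivative u2) (at \<rho>)"
    and v1: "\<And>r. r \<in> S \<Longrightarrow> (v has_real_derivative v1 r) (at r)" and v2: "(v1 has_real_derivative v2) (at \<rho>)"
    and v: "\<And>r. r \<in> S \<Longrightarrow> v r \<noteq> 0"
    and crit: "u1 \<rho> * v \<rho> - u \<rho> * v1 \<rho> = 0"
  shows "(deriv (\<lambda>r. u r / v r) has_real_derivative (u2 * v \<rho> - u \<rho> * v2) / (v \<rho>)\<^sup>2) (at \<rho>)"
proof (rule has_field_derivative_transform_within_open[OF _ S])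
  have "((\<lambda>r. (u1 r * v r - u r * v1 r) / (v r * v r)) has_real_derivative
          ((u2 * v \<rho> + v1 \<rho> * u1 \<rho> - (u1 \<rho> * v1 \<rho> + v2 * u \<rho>)) * (v \<rho> * v \<rho>)
            - (u1 \<rho> * v \<rho> - u \<rho> * v1 \<rho>) * (v1 \<rho> * v \<rho> + v1 \<rho> * v \<rho>))
          / ((v \<rho> * v \<rho>) * (v \<rho> * v \<rho>))) (at \<rho>)"
    by (rule DERIV_divide DERIV_diff DERIV_mult u2 v2 u1 v1 S(2))+ (use v[OF S(2)] in simp)
  also have "((u2 * v \<rho> + v1 \<rho> * u1 \<rho> - (u1 \<rho> * v1 \<rho> + v2 * u \<rho>)) * (v \<rho> * v \<rho>)
            - (u1 \<rho> * v \<rho> - u \<rho> * v1 \<rho>) * (v1 \<rho> * v \<rho> + v1 \<rho> * v \<rho>))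
          / ((v \<rho> * v \<rho>) * (v \<rho> * v \<rho>))
        = (u2 * v \<rho> - u \<rho> * v2) * (v \<rho> * v \<rho>) / ((v \<rho> * v \<rho>) * (v \<rho> * v \<rho>))"
    unfolding crit by (simp add: algebra_simps)
  also have "\<dots> = (u2 * v \<rho> - u \<rho> * v2) / (v \<rho>)\<^sup>2"
    using v[OF S(2)] by (simp add: power2_eq_square)
  finally show "((\<lambda>r. (u1 r * v r - u r * v1 r) / (v r)\<^sup>2) has_real_derivative
               (u2 * v \<rho> - u \<rho> * v2) / (v \<rho>)\<^sup>2) (at \<rho>)"
    by (simp add: power2_eq_square)
  show "(u1 r * v r - u r * v1 r) / (v r)\<^sup>2 = deriv (\<lambda>r. u r / v r) r" if "r \<in> S" for r
    by (rule deriv_divide_eq[OF u1 v1 v, symmetric]) (use that in simp_all)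
qed

lemma has_real_derivative_local_max_eq_0:
  assumes "(f has_real_derivative l) (at x)" and "\<forall>\<^sub>F y in at x. f y \<le> f x"
  shows "l = 0"
proof -
  have "(*) l = (\<lambda>h. 0)"
    using assms unfolding has_field_derivative_def by (rule has_derivative_local_max)
  from fun_cong[OF this, of 1] show ?thesis
    by simp
qed

lemma not_local_max_if_deriv2_pos:
  fixes f f' :: "real \<Rightarrow> real"
  assumes S: "open S" "\<rho> \<in> S"
    and f: "\<And>r. r \<in> S \<Longrightarrow> (f has_real_derivative f' r) (at r)"
    and crit: "f' \<rho> = 0" and f': "(f' has_real_derivative f'') (at \<rho>)" "f'' > 0"
  shows "\<not> (\<forall>\<^sub>F r in at \<rho>. f r \<le> f \<rho>)"
proof
  assume max: "\<forall>\<^sub>F r in at \<rho>. f r \<le> f \<rho>"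
  obtain d where d: "d > 0" "\<And>h. 0 < h \<Longrightarrow> h < d \<Longrightarrow> f' (\<rho> + h) > 0"
    using DERIV_pos_inc_right[OF f'] crit by auto
  obtain e where e: "e > 0" "ball \<rho> e \<subseteq> S"
    using S openE by blast
  have "\<forall>\<^sub>F r in at_right \<rho>. r \<in> {\<rho><..<\<rho> + min d e}"
    by (rule eventually_at_right_real) (use d e in simp)
  moreover have "\<forall>\<^sub>F r in at_right \<rho>. f r \<le> f \<rho>"
    using max by (simp add: eventually_at_split)
  ultimately have "\<forall>\<^sub>F r in at_right \<rho>. False"
  proof eventually_elim
    case (elim r)
    have inS: "t \<in> S" if "\<rho> \<le> t" "t \<le> r" for t
      using that elim e by (auto simp: dist_real_def subset_iff)
    have "f \<rho> < f r"
    proof (rule DERIV_pos_imp_increasing_open[of \<rho> r f])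
      show "\<exists>y. (f has_real_derivative y) (at t) \<and> y > 0" if "\<rho> < t" "t < r" for t
      proof (intro exI conjI)
        show "(f has_real_derivative f' t) (at t)"
          using inS that by (intro f) auto
        show "f' t > 0"
          using d(2)[of "t - \<rho>"] that elim by auto
      qed
      show "continuous_on {\<rho>..r} f"
      proof (intro continuous_at_imp_continuous_on ballI)
        fix t
        assume "t \<in> {\<rho>..r}"
        with inS have "t \<in> S"
          by simp
        then show "isCont f t"
          by (rule DERIV_isCont[OF f])
      qed
    qed (use elim in simp)
    with elim show False by simp
  qed
  then show False
    by simp
qed

lemma no_local_max_if_deriv2_pos_at_critical_points:
  fixes f f' :: "real \<Rightarrow> real"
  assumes S: "open S"
    and f: "\<And>r. r \<in> S \<Longrightarrow> (f has_real_derivative f' r) (at r)"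
    and convex: "\<And>\<rho>. \<rho> \<in> S \<Longrightarrow> f' \<rho> = 0 \<Longrightarrow> \<exists>f''. (f' has_real_derivative f'') (at \<rho>) \<and> f'' > 0"
  shows "\<not> (\<exists>\<rho>\<in>S. \<forall>\<^sub>F r in at \<rho>. f r \<le> f \<rho>)"
proof
  assume "\<exists>\<rho>\<in>S. \<forall>\<^sub>F r in at \<rho>. f r \<le> f \<rho>"
  then obtain \<rho> where \<rho>: "\<rho> \<in> S" and max: "\<forall>\<^sub>F r in at \<rho>. f r \<le> f \<rho>"
    by blast
  have crit: "f' \<rho> = 0"
    by (rule has_real_derivative_local_max_eq_0[OF f[OF \<rho>] max])
  then obtain f2 where f2: "(f' has_real_derivative f2) (at \<rho>)" "f2 > 0"
    using convex[OF \<rho>] by blast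
  show False
    using not_local_max_if_deriv2_pos[OF S \<rho> f crit f2] max by contradiction
qed

lemma deriv2_divide_pos_at_critical:
  fixes V :: "real^'n \<Rightarrow> real" and u u1 u2 v v1 v2 :: "real \<Rightarrow> real"
  assumes p: "p > 1" and S: "open S" "S \<subseteq> {0<..}"
    and u1: "\<And>r. r \<in> S \<Longrightarrow> (u has_real_derivative u1 r) (at r)"
    and u2: "\<And>r. r \<in> S \<Longrightarrow> (u1 has_real_derivative u2 r) (at r)"
    and v1: "\<And>r. r \<in> S \<Longrightarrow> (v has_real_derivative v1 r) (at r)"
    and v2: "\<And>r. r \<in> S \<Longrightarrow> (v1 has_real_derivative v2 r) (at r)"
    and pos: "\<And>r. r \<in> S \<Longrightarrow> u r > 0" "\<And>r. r \<in> S \<Longrightarrow> v r > 0"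
    and nz: "\<And>r. r \<in> S \<Longrightarrow> u1 r \<noteq> 0"
    and sub: "subsolution p V (norm -` S) (\<lambda>x. u (norm x))"
    and super: "supersolution p V (norm -` S) (\<lambda>x. v (norm x))"
    and strict: "strict_subsolution p V (norm -` S) (\<lambda>x. u (norm x))
                 \<or> strict_supersolution p V (norm -` S) (\<lambda>x. v (norm x))"
    and \<rho>: "\<rho> \<in> S" and crit: "deriv (\<lambda>r. u r / v r) \<rho> = 0"
  shows "\<exists>w''. (deriv (\<lambda>r. u r / v r) has_real_derivative w'') (at \<rho>) \<and> w'' > 0"
proof -
  have v_nz: "v r \<noteq> 0" if "r \<in> S" for r
    using pos(2)[OF that] by simp
  have "deriv (\<lambda>r. u r / v r) \<rho> = (u1 \<rho> * v \<rho> - u \<rho> * v1 \<rho>) / (v \<rho>)\<^sup>2"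
    by (rule deriv_divide_eq[OF u1[OF \<rho>] v1[OF \<rho>] v_nz[OF \<rho>]])
  with crit v_nz[OF \<rho>] have touch: "u1 \<rho> * v \<rho> - u \<rho> * v1 \<rho> = 0"
    by simp
  have "\<rho> \<ge> 0"
    using S(2) \<rho> by auto
  then obtain x :: "real^'n" where x: "norm x = \<rho>"
    by (rule vector_choose_size)
  then have xS: "norm x \<in> S" and touch_x: "u1 (norm x) * v (norm x) = u (norm x) * v1 (norm x)"
    using \<rho> touch by simp_all
  have sign: "op_pV p V (\<lambda>x. u (norm x)) x \<le> 0" "op_pV p V (\<lambda>x. v (norm x)) x \<ge> 0"
    "op_pV p V (\<lambda>x. u (norm x)) x < 0 \<or> op_pV p V (\<lambda>x. v (norm x)) x > 0"
    using sub super strict xS unfolding subsolution_def supersolution_def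
      strict_subsolution_def strict_supersolution_def by auto
  have "u (norm x) * v2 (norm x) < u2 (norm x) * v (norm x)"
    by (rule second_derivative_comparison_at_touching[OF p S u1 u2 v1 v2 xS pos[OF xS] nz[OF xS]
          touch_x sign])
  with x v_nz[OF \<rho>] have "(u2 \<rho> * v \<rho> - u \<rho> * v2 \<rho>) / (v \<rho>)\<^sup>2 > 0"
    by simp
  moreover have "(deriv (\<lambda>r. u r / v r) has_real_derivative (u2 \<rho> * v \<rho> - u \<rho> * v2 \<rho>) / (v \<rho>)\<^sup>2) (at \<rho>)"
    by (rule has_real_derivative_deriv_divide_at_critical[OF S(1) \<rho> u1 u2[OF \<rho>] v1 v2[OF \<rho>] v_nz touch])
  ultimately show ?thesis
    by blast
qed

lemma open_rad_oo: "open (rad_oo r0 R0)"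
  unfolding rad_oo_def
  by (cases R0) (simp_all add: open_Collect_less open_Collect_conj)

lemma rad_oo_subset_rad_co: "rad_oo r0 R0 \<subseteq> rad_co r0 R0"
  unfolding rad_oo_def rad_co_def by auto

lemma annulus_eq_vimage_rad_oo: "annulus r0 R0 = norm -` rad_oo r0 R0"
  unfolding annulus_def rad_oo_def by auto

lemma C2_radial_has_real_derivative_at:
  assumes "C2_radial (rad_co r0 R0) u u1 u2" and r: "r \<in> rad_oo r0 R0"
  shows "(u has_real_derivative u1 r) (at r)" and "(u1 has_real_derivative u2 r) (at r)"
proof -
  have "r \<in> interior (rad_co r0 R0)"
    using interior_maximal[OF rad_oo_subset_rad_co open_rad_oo] r by blast
  then have within: "at r within rad_co r0 R0 = at r"
    by (rule at_within_interior)
  have "r \<in> rad_co r0 R0"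
    using r rad_oo_subset_rad_co by blast
  with assms(1) have "(u has_real_derivative u1 r) (at r within rad_co r0 R0)"
    "(u1 has_real_derivative u2 r) (at r within rad_co r0 R0)"
    unfolding C2_radial_def by auto
  then show "(u has_real_derivative u1 r) (at r)" "(u1 has_real_derivative u2 r) (at r)"
    unfolding within .
qed

theorem lemma3p3:
  fixes V :: "real^'n \<Rightarrow> real"
    and p r0 :: real and R0 :: ereal
    and u u1 u2 v v1 v2 :: "real \<Rightarrow> real"
  assumes N2: "CARD('n) \<ge> 2"
    and p1: "p > 1"
    and r0: "0 < r0" "ereal r0 < R0"
    and V: "continuous_on (annulus r0 R0) V"
    and uC2: "C2_radial (rad_co r0 R0) u u1 u2"
    and vC2: "C2_radial (rad_co r0 R0) v v1 v2"
    and upos: "\<forall>r\<in>rad_co r0 R0. u r > 0"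
    and vpos: "\<forall>r\<in>rad_co r0 R0. v r > 0"
    and umon: "strictly_monotone_radial (rad_co r0 R0) u1"
    and vmon: "strictly_monotone_radial (rad_co r0 R0) v1"
    and usub: "subsolution p V (annulus r0 R0) (\<lambda>x. u (norm x))"
    and vsup: "supersolution p V (annulus r0 R0) (\<lambda>x. v (norm x))"
    and strict: "strict_subsolution p V (annulus r0 R0) (\<lambda>x. u (norm x))
                 \<or> strict_supersolution p V (annulus r0 R0) (\<lambda>x. v (norm x))"
  shows "(\<forall>\<rho>\<in>rad_oo r0 R0. deriv (\<lambda>r. u r / v r) \<rho> = 0
            \<longrightarrow> deriv (deriv (\<lambda>r. u r / v r)) \<rho> > 0)
         \<and> \<not> (\<exists>\<rho>\<in>rad_oo r0 R0. \<forall>\<^sub>F r in at \<rho>. u r / v r \<le> u \<rho> / v \<rho>)"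
proof -
  let ?S = "rad_oo r0 R0" and ?w = "\<lambda>r. u r / v r"
  have S: "open ?S" "?S \<subseteq> {0<..}"
    using r0(1) open_rad_oo by (auto simp: rad_oo_def)
  note du = C2_radial_has_real_derivative_at[OF uC2] and dv = C2_radial_has_real_derivative_at[OF vC2]
  have pos: "u r > 0" "v r > 0" "u1 r \<noteq> 0" if "r \<in> ?S" for r
  proof -
    have "r \<in> rad_co r0 R0"
      using that rad_oo_subset_rad_co by blast
    then show "u r > 0" "v r > 0" "u1 r \<noteq> 0"
      using upos vpos umon unfolding strictly_monotone_radial_def by auto
  qed
  note solutions = usub vsup strict
  have w2: "\<exists>w''. (deriv ?w has_real_derivative w'') (at \<rho>) \<and> w'' > 0"
    if "\<rho> \<in> ?S" "deriv ?w \<rho> = 0" for \<rho>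
    by (rule deriv2_divide_pos_at_critical[OF p1 S du dv pos solutions[unfolded annulus_eq_vimage_rad_oo] that])
  have dw: "(?w has_real_derivative deriv ?w r) (at r)" if "r \<in> ?S" for r
    using DERIV_divide[OF du(1)[OF that] dv(1)[OF that]] pos(2)[OF that] DERIV_imp_deriv by fastforce
  have "\<not> (\<exists>\<rho>\<in>?S. \<forall>\<^sub>F r in at \<rho>. ?w r \<le> ?w \<rho>)"
    by (rule no_local_max_if_deriv2_pos_at_critical_points[OF S(1) dw w2])
  moreover have "\<forall>\<rho>\<in>?S. deriv ?w \<rho> = 0 \<longrightarrow> deriv (deriv ?w) \<rho> > 0"
    using w2 DERIV_imp_deriv by blast
  ultimately show ?thesis
    by blast
qed

end
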